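(* Let $G$ be a graph with vertex set $[n]$. For any Hamiltonian path $\pi\in\mathrm{Ham}(G)$, the number of $G$-friendship parking functions $p$ with $\mathcal{O}_G(p)=\pi$ equals $\prod_{i\in[n]} b(i,\pi,G)$. Consequently $|\mathrm{FPF}(G)|=\sum_{\pi\in\mathrm{Ham}(G)}\prod_{i\in[n]} b(i,\pi,G)$.
   Context: $[n]=\{1,\dots,n\}$, $S_n$ is the set of permutations of $[n]$ in one-line notation $\pi=\pi_1\cdots\pi_n$. Friendship parking process for a graph $G$ on $[n]$ and a parking preference $p\in[n]^n$: cars $1,\dots,n$ enter in order into spots $1,\dots,n$ (initially empty); spot $k$ is available for car $i$ if it is unoccupied when $i$ enters and each of spots $k-1,k+1$ is unoccupied or occupied by a car adjacent to $i$ in $G$ (spots $0,n+1$ count as unoccupied); car $i$ parks in the first available spot $k\ge p_i$, failing otherwise. $\mathrm{FPF}(G)$ is the set of $p$ for which all cars park; for such $p$, $\mathcal{O}_G(p)=\pi\in S_n$ where $\pi_k$ is the car in spot $k$ at the end. $\mathrm{Ham}(G)$ is the set of permutations $\pi\in S_n$ with $\{\pi_k,\pi_{k+1}\}$ an edge of $G$ for all $k\in[n-1]$. Blockers: for $\pi\in\mathrm{Ham}(G)$ and $i\in[n]$, an element $j=\pi_k$ is a blocker for $i$ in $\pi$ if either (1) $j\le i$, or (2) $j>i$ and there is $\ell\in\{\pi_{k-1},\pi_{k+1}\}$ with $\ell<i$ and $\ell$ not adjacent to $i$ in $G$. The blocking sequence $B(i,\pi,G)$ is the longest contiguous block of $\pi$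 ending at $i$ all of whose elements are blockers for $i$; $b(i,\pi,G)$ is its length. *)

theory Defs
  imports Main
begin

text \<open>A graph on [n] is given by a symmetric irreflexive adjacency relation E.
Cars and spots are numbered 1..n. A parking preference is a list p of length n
with entries in {1..n}; car i prefers spot p ! (i - 1). A permutation in
one-line notation is a list pi of length n with pi ! (k - 1) = pi_k.
A parking state maps each spot to the car occupying it (None = empty).\<close>

definition spot_ok :: "(nat \<Rightarrow> nat \<Rightarrow> bool) \<Rightarrow> (nat \<Rightarrow> nat option) \<Rightarrow> nat \<Rightarrow> nat \<Rightarrow> bool" where
  "spot_ok E st i k = (case st k of None \<Rightarrow> True | Some j \<Rightarrow> E i j)"

definition available :: "(nat \<Rightarrow> nat \<Rightarrow> bool) \<Rightarrow> nat \<Rightarrow> (nat \<Rightarrow> nat option) \<Rightarrow> nat \<Rightarrow> nat \<Rightarrow> bool" where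
  "available E n st i k \<longleftrightarrow> 1 \<le> k \<and> k \<le> n \<and> st k = None
     \<and> (k = 1 \<or> spot_ok E st i (k - 1)) \<and> (k = n \<or> spot_ok E st i (k + 1))"

fun parking :: "(nat \<Rightarrow> nat \<Rightarrow> bool) \<Rightarrow> nat \<Rightarrow> nat list \<Rightarrow> nat \<Rightarrow> (nat \<Rightarrow> nat option) option" where
  "parking E n p 0 = Some (\<lambda>k. None)"
| "parking E n p (Suc m) =
     (case parking E n p m of
        None \<Rightarrow> None
      | Some st \<Rightarrow>
          (if \<exists>k. p ! m \<le> k \<and> available E n st (Suc m) k
           then Some (st((LEAST k. p ! m \<le> k \<and> available E n st (Suc m) k) := Some (Suc m)))
           else None))"

definition FPF :: "(nat \<Rightarrow> nat \<Rightarrow> bool) \<Rightarrow> nat \<Rightarrow> nat list set" where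
  "FPF E n = {p. length p = n \<and> set p \<subseteq> {1..n} \<and> parking E n p n \<noteq> None}"

definition outcome :: "(nat \<Rightarrow> nat \<Rightarrow> bool) \<Rightarrow> nat \<Rightarrow> nat list \<Rightarrow> nat list" where
  "outcome E n p = map (\<lambda>k. the (the (parking E n p n) k)) [1..<n+1]"

definition Ham :: "(nat \<Rightarrow> nat \<Rightarrow> bool) \<Rightarrow> nat \<Rightarrow> nat list set" where
  "Ham E n = {\<pi>. length \<pi> = n \<and> distinct \<pi> \<and> set \<pi> = {1..n}
                \<and> (\<forall>k. k + 1 < n \<longrightarrow> E (\<pi> ! k) (\<pi> ! (k + 1)))}"

text \<open>Position k is 0-based here: element pi ! k is a blocker for i.\<close>
definition is_blocker :: "(nat \<Rightarrow> nat \<Rightarrow> bool) \<Rightarrow> nat list \<Rightarrow> nat \<Rightarrow> nat \<Rightarrow> bool" where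
  "is_blocker E \<pi> i k \<longleftrightarrow> \<pi> ! k \<le> i \<or>
     (\<pi> ! k > i \<and>
       ((0 < k \<and> \<pi> ! (k - 1) < i \<and> \<not> E (\<pi> ! (k - 1)) i) \<or>
        (k + 1 < length \<pi> \<and> \<pi> ! (k + 1) < i \<and> \<not> E (\<pi> ! (k + 1)) i)))"

definition pos :: "nat list \<Rightarrow> nat \<Rightarrow> nat" where
  "pos \<pi> i = (THE q. q < length \<pi> \<and> \<pi> ! q = i)"

text \<open>b(i,pi,G): length of the longest contiguous block of blockers ending at i.\<close>
definition blen :: "(nat \<Rightarrow> nat \<Rightarrow> bool) \<Rightarrow> nat list \<Rightarrow> nat \<Rightarrow> nat" where
  "blen E \<pi> i = Max {m. m \<le> Suc (pos \<pi> i) \<and> (\<forall>t<m. is_blocker E \<pi> i (pos \<pi> i - t))}"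

end

theory Submission
  imports Defs
begin

text \<open>When all cars park, each car is adjacent to the cars in the neighbouring spots, so the
  outcome is a Hamiltonian path. Conversely fix such a path \<pi>. By induction on the number of
  cars, p has outcome \<pi> iff every car c, arriving when cars 1, ..., c - 1 already sit in their
  \<pi>-spots, finds its own \<pi>-spot as the first available spot at or after p_c. That spot is
  always available to c, and an earlier spot is unavailable to c exactly when it holds a blocker
  for c. Hence c may prefer precisely the b(c, \<pi>, G) spots of its blocking sequence, independently
  of the other cars.\<close>

lemma Least_ge_eq_iff:
  fixes b x :: nat
  assumes "P b"
  shows "(\<exists>k. x \<le> k \<and> P k) \<and> (LEAST k. x \<le> k \<and> P k) = b
    \<longleftrightarrow> x \<le> b \<and> (\<forall>k. x \<le> k \<longrightarrow> k < b \<longrightarrow> \<not> P k)"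
proof
  assume "(\<exists>k. x \<le> k \<and> P k) \<and> (LEAST k. x \<le> k \<and> P k) = b"
  then show "x \<le> b \<and> (\<forall>k. x \<le> k \<longrightarrow> k < b \<longrightarrow> \<not> P k)"
    by (metis (mono_tags, lifting) LeastI_ex not_less_Least)
next
  assume "x \<le> b \<and> (\<forall>k. x \<le> k \<longrightarrow> k < b \<longrightarrow> \<not> P k)"
  then show "(\<exists>k. x \<le> k \<and> P k) \<and> (LEAST k. x \<le> k \<and> P k) = b"
    using assms by (auto intro!: Least_equality simp: not_less[symmetric])
qed

lemma Max_prefix_mem:
  fixes N :: nat
  shows "Max {m. m \<le> N \<and> (\<forall>t<m. P t)} \<in> {m. m \<le> N \<and> (\<forall>t<m. P t)}"
  by (rule Max_in) auto

lemma le_Max_prefix_iff: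
  fixes N r :: nat
  assumes "r \<le> N"
  shows "r \<le> Max {m. m \<le> N \<and> (\<forall>t<m. P t)} \<longleftrightarrow> (\<forall>t<r. P t)"
  using Max_prefix_mem[of N P] assms by (auto intro: Max_ge)

lemma card_lists_nth_mem:
  assumes "\<And>j. j < n \<Longrightarrow> finite (A j)"
  shows "card {xs. length xs = n \<and> (\<forall>j<n. xs ! j \<in> A j)} = (\<Prod>j<n. card (A j))"
  using assms
proof (induction n arbitrary: A)
  case 0
  then show ?case by auto
next
  case (Suc n)
  let ?B = "{ys. length ys = n \<and> (\<forall>j<n. ys ! j \<in> A (Suc j))}"
  have "{xs. length xs = Suc n \<and> (\<forall>j<Suc n. xs ! j \<in> A j)} = (\<lambda>(x, ys). x # ys) ` (A 0 \<times> ?B)"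
    by (auto simp: length_Suc_conv All_less_Suc2 image_iff)
  moreover have "inj_on (\<lambda>(x, ys). x # ys) (A 0 \<times> ?B)"
    by (auto simp: inj_on_def)
  moreover have "card ?B = (\<Prod>j<n. card (A (Suc j)))"
    using Suc by simp
  ultimately show ?case
    by (simp add: card_image card_cartesian_product prod.lessThan_Suc_shift del: prod.lessThan_Suc)
qed

section \<open>Blocking sequences\<close>

lemma pos_nth:
  assumes "distinct \<pi>" "q < length \<pi>"
  shows "pos \<pi> (\<pi> ! q) = q"
  using assms unfolding pos_def by (auto simp: nth_eq_iff_index_eq)

lemma pos_less_length:
  assumes "distinct \<pi>" "c \<in> set \<pi>"
  shows "pos \<pi> c < length \<pi>"
  using assms pos_nth[OF assms(1)] by (auto simp: in_set_conv_nth)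

lemma nth_pos:
  assumes "distinct \<pi>" "c \<in> set \<pi>"
  shows "\<pi> ! pos \<pi> c = c"
  using assms pos_nth[OF assms(1)] by (auto simp: in_set_conv_nth)

lemma blen_le:
  "blen E \<pi> c \<le> Suc (pos \<pi> c)"
  using Max_prefix_mem[of "Suc (pos \<pi> c)" "\<lambda>t. is_blocker E \<pi> c (pos \<pi> c - t)"]
  unfolding blen_def by simp

lemma le_blen_iff:
  assumes "r \<le> Suc (pos \<pi> c)"
  shows "r \<le> blen E \<pi> c \<longleftrightarrow> (\<forall>t<r. is_blocker E \<pi> c (pos \<pi> c - t))"
  unfolding blen_def using assms by (rule le_Max_prefix_iff)

text \<open>Spots are 1-based, so car c sits in spot Suc (pos \<pi> c); these are the spots of its
  blocking sequence.\<close>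

definition blocking_spots :: "(nat \<Rightarrow> nat \<Rightarrow> bool) \<Rightarrow> nat list \<Rightarrow> nat \<Rightarrow> nat set" where
  "blocking_spots E \<pi> c = {pos \<pi> c + 2 - blen E \<pi> c .. Suc (pos \<pi> c)}"

lemma finite_blocking_spots:
  "finite (blocking_spots E \<pi> c)"
  by (simp add: blocking_spots_def)

lemma card_blocking_spots:
  "card (blocking_spots E \<pi> c) = blen E \<pi> c"
  using blen_le[of E \<pi> c] by (simp add: blocking_spots_def)

lemma mem_blocking_spots_iff:
  assumes "distinct \<pi>" "c \<in> set \<pi>" "1 \<le> x"
  shows "x \<in> blocking_spots E \<pi> c \<longleftrightarrow>
    x \<le> Suc (pos \<pi> c) \<and> (\<forall>k. x \<le> k \<longrightarrow> k < Suc (pos \<pi> c) \<longrightarrow> is_blocker E \<pi> c (k - 1))"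
proof -
  define q where "q = pos \<pi> c"
  have own: "is_blocker E \<pi> c q"
    using nth_pos[OF assms(1,2)] by (simp add: is_blocker_def q_def)
  have "(\<forall>t < Suc q + 1 - x. is_blocker E \<pi> c (q - t)) \<longleftrightarrow>
      (\<forall>k. x \<le> k \<longrightarrow> k < Suc q \<longrightarrow> is_blocker E \<pi> c (k - 1))" if "x \<le> Suc q"
  proof (intro iffI allI impI)
    fix k assume H: "\<forall>t < Suc q + 1 - x. is_blocker E \<pi> c (q - t)" and k: "x \<le> k" "k < Suc q"
    have "Suc q - k < Suc q + 1 - x"
      using k by linarith
    moreover have "q - (Suc q - k) = k - 1"
      using k assms(3) by linarith
    ultimately show "is_blocker E \<pi> c (k - 1)"
      using H by metis
  next
    fix t assume H: "\<forall>k. x \<le> k \<longrightarrow> k < Suc q \<longrightarrow> is_blocker E \<pi> c (k - 1)"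
      and t: "t < Suc q + 1 - x"
    show "is_blocker E \<pi> c (q - t)"
    proof (cases t)
      case 0
      then show ?thesis using own by simp
    next
      case (Suc t')
      then have "x \<le> Suc q - t" "Suc q - t < Suc q" "Suc q - t - 1 = q - t"
        using t by linarith+
      then show ?thesis
        using H by metis
    qed
  qed
  moreover have "x \<in> blocking_spots E \<pi> c \<longleftrightarrow> x \<le> Suc q \<and> Suc q + 1 - x \<le> blen E \<pi> c"
    unfolding blocking_spots_def q_def atLeastAtMost_iff by linarith
  moreover have "Suc q + 1 - x \<le> blen E \<pi> c \<longleftrightarrow> (\<forall>t < Suc q + 1 - x. is_blocker E \<pi> c (q - t))"
    if "x \<le> Suc q"
    using le_blen_iff[of "Suc q + 1 - x" \<pi> c E] assms(3) that q_def by simp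
  ultimately show ?thesis
    unfolding q_def by blast
qed

section \<open>Invariants of the parking process\<close>

lemma parking_SucE:
  assumes "parking E n p (Suc m) = Some st"
  obtains st0 L where "parking E n p m = Some st0"
    "L = (LEAST k. p ! m \<le> k \<and> available E n st0 (Suc m) k)"
    "p ! m \<le> L" "available E n st0 (Suc m) L" "st = st0(L \<mapsto> Suc m)"
proof -
  obtain st0 where st0: "parking E n p m = Some st0"
    using assms by (cases "parking E n p m") auto
  let ?P = "\<lambda>k. p ! m \<le> k \<and> available E n st0 (Suc m) k"
  have "\<exists>k. ?P k"
    using assms st0 by (auto split: if_splits)
  then show ?thesis
    using that[OF st0 refl] LeastI_ex[of ?P] assms st0 by auto
qed

lemma parking_dom_subset:
  "parking E n p m = Some st \<Longrightarrow> dom st \<subseteq> {1..n}"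
proof (induction m arbitrary: st)
  case 0
  then show ?case by auto
next
  case (Suc m)
  from Suc.prems obtain st0 L where "parking E n p m = Some st0"
    and "available E n st0 (Suc m) L" and "st = st0(L \<mapsto> Suc m)"
    by (rule parking_SucE)
  then have "dom st = insert L (dom st0)" "L \<in> {1..n}" "dom st0 \<subseteq> {1..n}"
    using Suc.IH by (auto simp: available_def)
  then show ?case
    by simp
qed

lemma parking_bij_betw:
  "parking E n p m = Some st \<Longrightarrow> bij_betw (\<lambda>k. the (st k)) (dom st) {1..m}"
proof (induction m arbitrary: st)
  case 0
  then show ?case by (auto simp: bij_betw_def)
next
  case (Suc m)
  from Suc.prems obtain st0 L where st0: "parking E n p m = Some st0"
    and L: "available E n st0 (Suc m) L" and st: "st = st0(L \<mapsto> Suc m)"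
    by (rule parking_SucE)
  have "L \<notin> dom st0"
    using L by (auto simp: available_def)
  moreover have "bij_betw (\<lambda>k. the (st k)) (dom st0) {1..m}"
  proof (rule bij_betw_cong[THEN iffD1])
    show "bij_betw (\<lambda>k. the (st0 k)) (dom st0) {1..m}"
      using st0 by (rule Suc.IH)
    show "\<And>k. k \<in> dom st0 \<Longrightarrow> the (st0 k) = the (st k)"
      using \<open>L \<notin> dom st0\<close> st by auto
  qed
  ultimately have "bij_betw (\<lambda>k. the (st k)) (dom st0 \<union> {L}) ({1..m} \<union> {Suc m})"
    using notIn_Un_bij_betw[of L "dom st0" "\<lambda>k. the (st k)" "{1..m}"] st by simp
  moreover have "dom st = dom st0 \<union> {L}" "{1..Suc m} = {1..m} \<union> {Suc m}"
    using st by auto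
  ultimately show ?case by simp
qed

lemma parking_adjacent:
  assumes "symp E"
  shows "parking E n p m = Some st \<Longrightarrow> st k = Some j \<Longrightarrow> st (Suc k) = Some j' \<Longrightarrow> E j j'"
proof (induction m arbitrary: st k j j')
  case 0
  then show ?case by auto
next
  case (Suc m)
  from Suc.prems(1) obtain st0 L where st0: "parking E n p m = Some st0"
    and L: "available E n st0 (Suc m) L" and st: "st = st0(L \<mapsto> Suc m)"
    by (rule parking_SucE)
  have dom: "dom st0 \<subseteq> {1..n}"
    using st0 by (rule parking_dom_subset)
  consider "k = L" | "Suc k = L" | "k \<noteq> L" "Suc k \<noteq> L"
    by blast
  then show ?case
  proof cases
    case 1
    then have "st0 (Suc L) = Some j'" "j = Suc m"
      using Suc.prems st by auto
    moreover from this(1) have "L \<noteq> n"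
      using dom by auto
    ultimately show ?thesis
      using L by (auto simp: available_def spot_ok_def)
  next
    case 2
    then have "st0 k = Some j" "j' = Suc m"
      using Suc.prems st by auto
    moreover from this(1) have "L \<noteq> 1"
      using dom 2 by auto
    ultimately show ?thesis
      using L 2 \<open>symp E\<close> by (auto simp: available_def spot_ok_def dest: sympD)
  next
    case 3
    then show ?thesis
      using Suc.prems st Suc.IH[OF st0] by auto
  qed
qed


lemma parking_dom_eq:
  assumes "parking E n p n = Some st"
  shows "dom st = {1..n}"
proof -
  have "card (dom st) = n"
    using bij_betw_same_card[OF parking_bij_betw[OF assms]] by simp
  then show ?thesis
    using parking_dom_subset[OF assms] by (intro card_subset_eq) auto
qed

lemma length_outcome: "length (outcome E n p) = n"
  by (simp add: outcome_def)

lemma outcome_nth: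
  assumes "parking E n p n = Some st" "k < n"
  shows "outcome E n p ! k = the (st (Suc k))"
  using assms by (simp add: outcome_def del: upt_Suc)

lemma outcome_in_Ham:
  assumes "symp E" and p: "p \<in> FPF E n"
  shows "outcome E n p \<in> Ham E n"
proof -
  obtain st where st: "parking E n p n = Some st"
    using p unfolding FPF_def by auto
  let ?f = "\<lambda>k. the (st k)"
  have out: "outcome E n p = map ?f [1..<n+1]"
    using st unfolding outcome_def by simp
  have dom: "dom st = {1..n}"
    using st by (rule parking_dom_eq)
  have bij: "bij_betw ?f {1..n} {1..n}"
    using parking_bij_betw[OF st] dom by simp
  have upt: "set [1..<n+1] = {1..n}"
    by auto
  have "distinct (map ?f [1..<n+1])"
    using bij by (simp only: distinct_map upt bij_betw_def distinct_upt)
  moreover have "set (map ?f [1..<n+1]) = {1..n}"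
    using bij by (simp only: set_map upt bij_betw_def)
  moreover have "E (?f (Suc k)) (?f (Suc (Suc k)))" if "k + 1 < n" for k
  proof -
    have "Suc k \<in> dom st" "Suc (Suc k) \<in> dom st"
      using dom that by auto
    then show ?thesis
      using parking_adjacent[OF \<open>symp E\<close> st] by auto
  qed
  ultimately show ?thesis
    unfolding Ham_def out by (auto simp: nth_Cons' simp del: upt_Suc)
qed

section \<open>Parking along a Hamiltonian path\<close>

lemma HamD:
  assumes "\<pi> \<in> Ham E n"
  shows "length \<pi> = n" "distinct \<pi>" "set \<pi> = {1..n}"
    "\<And>k. k + 1 < n \<Longrightarrow> E (\<pi> ! k) (\<pi> ! (k + 1))"
  using assms unfolding Ham_def by auto

lemma Ham_nth_mem:
  assumes "\<pi> \<in> Ham E n" "k < n"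
  shows "\<pi> ! k \<in> {1..n}"
  using HamD(1,3)[OF assms(1)] nth_mem[of k \<pi>] assms(2) by simp

definition ham_state :: "nat list \<Rightarrow> nat \<Rightarrow> nat \<Rightarrow> nat option" where
  "ham_state \<pi> m k =
     (if 1 \<le> k \<and> k \<le> length \<pi> \<and> \<pi> ! (k - 1) \<le> m then Some (\<pi> ! (k - 1)) else None)"

lemma ham_state_0:
  assumes "\<pi> \<in> Ham E n"
  shows "ham_state \<pi> 0 = Map.empty"
proof
  fix k
  show "ham_state \<pi> 0 k = None"
    using Ham_nth_mem[OF assms, of "k - 1"] HamD(1)[OF assms] by (force simp: ham_state_def)
qed

lemma ham_state_complete:
  assumes "\<pi> \<in> Ham E n"
  shows "ham_state \<pi> n k = (if 1 \<le> k \<and> k \<le> n then Some (\<pi> ! (k - 1)) else None)"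
  using Ham_nth_mem[OF assms, of "k - 1"] HamD(1)[OF assms] by (auto simp: ham_state_def)

lemma ham_state_Suc:
  assumes "\<pi> \<in> Ham E n" "Suc m \<le> n"
  shows "ham_state \<pi> (Suc m) = (ham_state \<pi> m)(Suc (pos \<pi> (Suc m)) \<mapsto> Suc m)"
proof -
  note \<pi> = HamD[OF assms(1)]
  have c: "pos \<pi> (Suc m) < n" "\<pi> ! pos \<pi> (Suc m) = Suc m"
    using pos_less_length[OF \<pi>(2), of "Suc m"] nth_pos[OF \<pi>(2), of "Suc m"] \<pi> assms(2) by auto
  show ?thesis
  proof
    fix k
    show "ham_state \<pi> (Suc m) k = ((ham_state \<pi> m)(Suc (pos \<pi> (Suc m)) \<mapsto> Suc m)) k"
    proof (cases "k = Suc (pos \<pi> (Suc m))")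
      case True
      then show ?thesis
        using c \<pi>(1) by (simp add: ham_state_def)
    next
      case False
      then have "1 \<le> k \<Longrightarrow> k \<le> n \<Longrightarrow> \<pi> ! (k - 1) \<noteq> Suc m"
        using pos_nth[OF \<pi>(2), of "k - 1"] \<pi>(1) by auto
      then show ?thesis
        using False \<pi>(1) by (auto simp: ham_state_def)
    qed
  qed
qed

lemma available_ham_state_own_spot:
  assumes "symp E" "\<pi> \<in> Ham E n" "Suc m \<le> n"
  shows "available E n (ham_state \<pi> m) (Suc m) (Suc (pos \<pi> (Suc m)))"
proof -
  note \<pi> = HamD[OF assms(2)]
  define q where "q = pos \<pi> (Suc m)"
  have q: "q < n" "\<pi> ! q = Suc m"
    using pos_less_length[OF \<pi>(2), of "Suc m"] nth_pos[OF \<pi>(2), of "Suc m"] \<pi> assms(3) q_def by auto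
  have left: "Suc q = 1 \<or> spot_ok E (ham_state \<pi> m) (Suc m) q"
  proof (cases q)
    case (Suc r)
    then have "E (Suc m) (\<pi> ! r)"
      using \<pi>(4)[of r] q assms(1) by (auto dest: sympD)
    then show ?thesis
      using Suc by (simp add: spot_ok_def ham_state_def)
  qed simp
  have right: "Suc q = n \<or> spot_ok E (ham_state \<pi> m) (Suc m) (Suc q + 1)"
    using \<pi>(1) \<pi>(4)[of q] q by (auto simp: spot_ok_def ham_state_def)
  show ?thesis
    using left right q \<pi>(1) unfolding available_def q_def[symmetric] by (simp add: ham_state_def)
qed

lemma available_ham_state_iff:
  assumes "symp E" "\<pi> \<in> Ham E n" "Suc m \<le> n"
    and k: "1 \<le> k" "k \<le> n" "k \<noteq> Suc (pos \<pi> (Suc m))"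
  shows "available E n (ham_state \<pi> m) (Suc m) k \<longleftrightarrow> \<not> is_blocker E \<pi> (Suc m) (k - 1)"
proof -
  note \<pi> = HamD[OF assms(2)]
  have ne: "\<pi> ! (k - 1) \<noteq> Suc m"
    using pos_nth[OF \<pi>(2), of "k - 1"] \<pi>(1) k by auto
  have E_comm: "E a b = E b a" for a b
    using assms(1) by (auto dest: sympD)
  have free: "ham_state \<pi> m k = None \<longleftrightarrow> \<pi> ! (k - 1) > Suc m"
    using k ne \<pi>(1) by (auto simp: ham_state_def)
  have left: "(k = 1 \<or> spot_ok E (ham_state \<pi> m) (Suc m) (k - 1)) \<longleftrightarrow>
      \<not> (0 < k - 1 \<and> \<pi> ! (k - 1 - 1) < Suc m \<and> \<not> E (\<pi> ! (k - 1 - 1)) (Suc m))"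
    using k \<pi>(1) by (auto simp: spot_ok_def ham_state_def E_comm)
  have right: "(k = n \<or> spot_ok E (ham_state \<pi> m) (Suc m) (k + 1)) \<longleftrightarrow>
      \<not> (k - 1 + 1 < length \<pi> \<and> \<pi> ! (k - 1 + 1) < Suc m \<and> \<not> E (\<pi> ! (k - 1 + 1)) (Suc m))"
    using k \<pi>(1) by (auto simp: spot_ok_def ham_state_def E_comm)
  show ?thesis
    using k ne unfolding available_def free left right is_blocker_def by auto
qed

lemma first_available_ham_state_iff:
  assumes "symp E" "\<pi> \<in> Ham E n" "Suc m \<le> n" "1 \<le> x"
  shows "(\<exists>k. x \<le> k \<and> available E n (ham_state \<pi> m) (Suc m) k) \<and>
      (LEAST k. x \<le> k \<and> available E n (ham_state \<pi> m) (Suc m) k) = Suc (pos \<pi> (Suc m))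
    \<longleftrightarrow> x \<in> blocking_spots E \<pi> (Suc m)"
proof -
  note \<pi> = HamD[OF assms(2)]
  have c: "Suc m \<in> set \<pi>"
    using \<pi>(3) assms(3) by simp
  then have "Suc (pos \<pi> (Suc m)) \<le> n"
    using pos_less_length[OF \<pi>(2)] \<pi>(1) by (simp add: Suc_le_eq)
  then have "(\<forall>k. x \<le> k \<longrightarrow> k < Suc (pos \<pi> (Suc m)) \<longrightarrow> \<not> available E n (ham_state \<pi> m) (Suc m) k)
      \<longleftrightarrow> (\<forall>k. x \<le> k \<longrightarrow> k < Suc (pos \<pi> (Suc m)) \<longrightarrow> is_blocker E \<pi> (Suc m) (k - 1))"
    using available_ham_state_iff[OF assms(1-3)] assms(4) by auto
  then show ?thesis
    unfolding Least_ge_eq_iff[where P = "available E n (ham_state \<pi> m) (Suc m)",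
      OF available_ham_state_own_spot[OF assms(1-3)]]
    using mem_blocking_spots_iff[OF \<pi>(2) c assms(4)] by simp
qed

lemma parking_Suc_eq_ham_state_iff:
  assumes "symp E" "\<pi> \<in> Ham E n" "Suc m \<le> n" "1 \<le> p ! m"
  shows "parking E n p (Suc m) = Some (ham_state \<pi> (Suc m)) \<longleftrightarrow>
    parking E n p m = Some (ham_state \<pi> m) \<and> p ! m \<in> blocking_spots E \<pi> (Suc m)"
proof
  assume "parking E n p m = Some (ham_state \<pi> m) \<and> p ! m \<in> blocking_spots E \<pi> (Suc m)"
  then show "parking E n p (Suc m) = Some (ham_state \<pi> (Suc m))"
    using first_available_ham_state_iff[OF assms] ham_state_Suc[OF assms(2,3)] by simp
next
  assume "parking E n p (Suc m) = Some (ham_state \<pi> (Suc m))"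
  then obtain st0 L where st0: "parking E n p m = Some st0"
    and L: "L = (LEAST k. p ! m \<le> k \<and> available E n st0 (Suc m) k)"
      "p ! m \<le> L" "available E n st0 (Suc m) L"
    and st: "ham_state \<pi> (Suc m) = st0(L \<mapsto> Suc m)"
    by (rule parking_SucE)
  note \<pi> = HamD[OF assms(2)]
  have "ham_state \<pi> (Suc m) L = Some (Suc m)"
    using st by simp
  then have "1 \<le> L" "L \<le> n" "\<pi> ! (L - 1) = Suc m"
    using \<pi>(1) by (auto simp: ham_state_def split: if_splits)
  then have L_spot: "L = Suc (pos \<pi> (Suc m))"
    using pos_nth[OF \<pi>(2), of "L - 1"] \<pi>(1) by auto
  have "st0 = ham_state \<pi> m"
  proof
    fix k
    show "st0 k = ham_state \<pi> m k"
    proof (cases "k = L")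
      case True
      then show ?thesis
        using L(3) pos_less_length[OF \<pi>(2), of "Suc m"] nth_pos[OF \<pi>(2), of "Suc m"] \<pi>(3) assms(3) L_spot
        by (simp add: available_def ham_state_def)
    next
      case False
      then show ?thesis
        using st ham_state_Suc[OF assms(2,3)] L_spot by (metis fun_upd_other)
    qed
  qed
  then show "parking E n p m = Some (ham_state \<pi> m) \<and> p ! m \<in> blocking_spots E \<pi> (Suc m)"
    using first_available_ham_state_iff[OF assms] st0 L L_spot by blast
qed

lemma parking_eq_ham_state_iff:
  assumes "symp E" "\<pi> \<in> Ham E n"
  shows "m \<le> n \<Longrightarrow> (\<forall>i<m. 1 \<le> p ! i) \<Longrightarrow>
    parking E n p m = Some (ham_state \<pi> m) \<longleftrightarrow> (\<forall>i<m. p ! i \<in> blocking_spots E \<pi> (Suc i))"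
proof (induction m)
  case 0
  then show ?case
    using ham_state_0[OF assms(2)] by simp
next
  case (Suc m)
  then show ?case
    using parking_Suc_eq_ham_state_iff[OF assms, of m p] by (auto simp: less_Suc_eq)
qed

lemma FPF_outcome_eq_iff:
  assumes "\<pi> \<in> Ham E n"
  shows "p \<in> FPF E n \<and> outcome E n p = \<pi> \<longleftrightarrow>
    length p = n \<and> set p \<subseteq> {1..n} \<and> parking E n p n = Some (ham_state \<pi> n)"
proof
  assume p: "p \<in> FPF E n \<and> outcome E n p = \<pi>"
  then obtain st where st: "parking E n p n = Some st"
    unfolding FPF_def by auto
  have "st = ham_state \<pi> n"
  proof
    fix k
    show "st k = ham_state \<pi> n k"
    proof (cases "1 \<le> k \<and> k \<le> n")
      case True
      then have "st k = Some (the (st k))"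
        using parking_dom_eq[OF st] by (metis atLeastAtMost_iff domIff option.collapse)
      moreover have "k - 1 < n"
        using True by linarith
      then have "the (st k) = \<pi> ! (k - 1)"
        using outcome_nth[OF st, of "k - 1"] p True by simp
      ultimately show ?thesis
        using True ham_state_complete[OF assms] by simp
    next
      case False
      then show ?thesis
        using parking_dom_eq[OF st] ham_state_complete[OF assms] by auto
    qed
  qed
  then show "length p = n \<and> set p \<subseteq> {1..n} \<and> parking E n p n = Some (ham_state \<pi> n)"
    using p st unfolding FPF_def by auto
next
  assume p: "length p = n \<and> set p \<subseteq> {1..n} \<and> parking E n p n = Some (ham_state \<pi> n)"
  have "outcome E n p = \<pi>"
    using HamD(1)[OF assms] length_outcome outcome_nth[OF p[THEN conjunct2, THEN conjunct2]]
      ham_state_complete[OF assms] by (intro nth_equalityI) auto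
  then show "p \<in> FPF E n \<and> outcome E n p = \<pi>"
    using p unfolding FPF_def by auto
qed

lemma card_FPF_outcome_eq:
  assumes "symp E" "\<pi> \<in> Ham E n"
  shows "card {p \<in> FPF E n. outcome E n p = \<pi>} = (\<Prod>i\<in>{1..n}. blen E \<pi> i)"
proof -
  note \<pi> = HamD[OF assms(2)]
  have spots: "blocking_spots E \<pi> (Suc i) \<subseteq> {1..n}" if "i < n" for i
    using pos_less_length[OF \<pi>(2), of "Suc i"] nth_pos[OF \<pi>(2), of "Suc i"] \<pi>(1,3) that blen_le[of E \<pi> "Suc i"]
    by (auto simp: blocking_spots_def)
  have "p \<in> FPF E n \<and> outcome E n p = \<pi> \<longleftrightarrow>
      length p = n \<and> (\<forall>i<n. p ! i \<in> blocking_spots E \<pi> (Suc i))" for p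
  proof
    assume "p \<in> FPF E n \<and> outcome E n p = \<pi>"
    then have p: "length p = n" "set p \<subseteq> {1..n}" "parking E n p n = Some (ham_state \<pi> n)"
      using FPF_outcome_eq_iff[OF assms(2)] by blast+
    moreover have "\<forall>i<n. 1 \<le> p ! i"
      using p(1,2) nth_mem by fastforce
    ultimately show "length p = n \<and> (\<forall>i<n. p ! i \<in> blocking_spots E \<pi> (Suc i))"
      using parking_eq_ham_state_iff[OF assms, of n p] by simp
  next
    assume p: "length p = n \<and> (\<forall>i<n. p ! i \<in> blocking_spots E \<pi> (Suc i))"
    then have "\<forall>i<n. p ! i \<in> {1..n}"
      using spots by blast
    then have "set p \<subseteq> {1..n}" "parking E n p n = Some (ham_state \<pi> n)"
      using parking_eq_ham_state_iff[OF assms, of n p] p by (auto simp: set_conv_nth)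
    then show "p \<in> FPF E n \<and> outcome E n p = \<pi>"
      using FPF_outcome_eq_iff[OF assms(2)] p by blast
  qed
  then have "{p \<in> FPF E n. outcome E n p = \<pi>} =
      {p. length p = n \<and> (\<forall>i<n. p ! i \<in> blocking_spots E \<pi> (Suc i))}"
    by blast
  also have "card \<dots> = (\<Prod>i<n. blen E \<pi> (Suc i))"
    by (simp add: card_lists_nth_mem finite_blocking_spots card_blocking_spots)
  also have "\<dots> = (\<Prod>i\<in>{1..n}. blen E \<pi> i)"
    by (simp add: prod.atLeast1_atMost_eq)
  finally show ?thesis .
qed

theorem corollary2p7:
  fixes E :: "nat \<Rightarrow> nat \<Rightarrow> bool" and n :: nat
  assumes sym: "\<And>x y. E x y \<Longrightarrow> E y x"
    and irrefl: "\<And>x. \<not> E x x"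
  shows "(\<forall>\<pi>\<in>Ham E n. card {p \<in> FPF E n. outcome E n p = \<pi>} = (\<Prod>i\<in>{1..n}. blen E \<pi> i))
       \<and> card (FPF E n) = (\<Sum>\<pi>\<in>Ham E n. \<Prod>i\<in>{1..n}. blen E \<pi> i)"
proof -
  have "symp E"
    using sym by (rule sympI)
  then have fibres: "\<forall>\<pi>\<in>Ham E n. card {p \<in> FPF E n. outcome E n p = \<pi>} = (\<Prod>i\<in>{1..n}. blen E \<pi> i)"
    using card_FPF_outcome_eq by blast
  have lists_finite: "finite {xs. set xs \<subseteq> {1..n} \<and> length xs = n}"
    by (rule finite_lists_length_eq) simp
  have "finite (Ham E n)"
    by (rule finite_subset[OF _ lists_finite]) (auto simp: Ham_def)
  moreover have "finite {p \<in> FPF E n. outcome E n p = \<pi>}" for \<pi>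
    by (rule finite_subset[OF _ lists_finite]) (auto simp: FPF_def)
  ultimately have "card (\<Union>\<pi>\<in>Ham E n. {p \<in> FPF E n. outcome E n p = \<pi>})
      = (\<Sum>\<pi>\<in>Ham E n. card {p \<in> FPF E n. outcome E n p = \<pi>})"
    by (intro card_UN_disjoint) auto
  moreover have "FPF E n = (\<Union>\<pi>\<in>Ham E n. {p \<in> FPF E n. outcome E n p = \<pi>})"
    using outcome_in_Ham[OF \<open>symp E\<close>] by blast
  ultimately show ?thesis
    using fibres by simp
qed

end
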